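(* For all integers $v\geq 1$ and $r\geq 1$, $$\sum_{i=1}^{2v-1}2^{i-1}\binom{2r+i-1}{i}\sigma(2v+1-i,2r+i)+2^{2v}\sum_{j=0}^{2r-2}(-1)^j\binom{2v+j}{j}\lambda(2v+1+j)\lambda(2r-j)$$ $$-2^{2v}\binom{2v+2r-1}{2v}(v+r)\lambda(2v+2r+1)+2^{2v}\binom{2v+2r-1}{2v}\sum_{j=1}^{r+v-1}\lambda(2j)\lambda(2r+2v-2j+1)=0.$$
   Context: For integers $t\geq 1$, $n\geq 1$ let $S_n^{(t)}=\sum_{k=1}^{n}\frac{1}{(2k-1)^t}$, and for integers $s\geq 2$, $t\geq 1$ let $\sigma(s,t)=\sum_{n\geq 1}\frac{S_n^{(t)}}{n^s}$. For real $s>1$, $\lambda(s)=\sum_{n\geq 1}\frac{1}{(2n-1)^s}$. *)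

theory Defs
  imports "HOL-Analysis.Analysis"
begin

definition oddHarm :: "nat \<Rightarrow> nat \<Rightarrow> real" where
  "oddHarm t n = (\<Sum>k=1..n. 1 / (2 * real k - 1) ^ t)"

definition sigmaOdd :: "nat \<Rightarrow> nat \<Rightarrow> real" where
  "sigmaOdd s t = (\<Sum>n. oddHarm t (Suc n) / real (Suc n) ^ s)"

definition lambdaDir :: "real \<Rightarrow> real" where
  "lambdaDir s = (\<Sum>n. 1 / (2 * real (Suc n) - 1) powr s)"

end

theory Submission
  imports Defs
begin

(*
  Write x = 2k + 1 and y = 2l + 1 and sum over all pairs (k, l) of natural numbers. Since
  x + y = 2 (k + l + 1), grouping the pairs by k + l shows that sigma(s, t) / 2^s is the double sum
  of 1 / (x^t (x + y)^s), while lambda(a) lambda(b) is the double sum of 1 / (x^a y^b).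

  The double sum of 1 / (y^(2r) (x + y)^(2v+1)) - 1 / (x^(2r) (x + y)^(2v+1)) vanishes by symmetry.
  Expanding the first term in partial fractions with respect to x turns this into the sigma-terms
  and the lambda-products of the identity, plus a multiple of the double sum of 1 / (x^n y (x + y))
  with n = 2r + 2v - 1.

  That last sum is evaluated by adding the sum of 1 / (x^n y (y - x)) over x \<noteq> y. For fixed k the
  sum of the two telescopes in l, which gives lambda(n + 2) in total; the added sum, symmetrised in
  (k, l), is a combination of the products lambda(j + 2) lambda(n - j) and of lambda(n + 2). For odd
  n these products pair up into the sum over lambda(2j) lambda(2r + 2v + 1 - 2j).
*)

section \<open>Partial fractions\<close>

(*
  The expansion of 1 / (y^B (x + y)^C) in powers of 1 / x consists of the terms of pf_zpart, with
  powers of z = x + y in the denominator, and those of pf_ypart, with powers of y. The binomial in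
  pf_ypart is written with C + u - 1 so that for C = 0 only the term u = 0 survives.
*)
definition pf_zpart :: "'a::field \<Rightarrow> 'a \<Rightarrow> nat \<Rightarrow> nat \<Rightarrow> 'a" where
  "pf_zpart x z B C = (\<Sum>i<C. of_nat ((B + i - 1) choose i) / (x ^ (B + i) * z ^ (C - i)))"

definition pf_ypart :: "'a::field \<Rightarrow> 'a \<Rightarrow> nat \<Rightarrow> nat \<Rightarrow> 'a" where
  "pf_ypart x y B C =
    (\<Sum>u<B. (-1) ^ u * of_nat ((C + u - 1) choose u) / (x ^ (C + u) * y ^ (B - u)))"

lemma pf_zpart_Suc_Suc:
  assumes "x \<noteq> 0" "z \<noteq> 0"
  shows "pf_zpart x z (Suc B) (Suc C) = (pf_zpart x z (Suc B) C + pf_zpart x z B (Suc C)) / x"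
proof -
  have "of_nat ((B + i + 1) choose Suc i) / (x ^ (B + i + 2) * z ^ (C - i))
      = (of_nat ((B + i) choose i) / (x ^ (B + i + 1) * z ^ (C - i))
         + of_nat ((B + i) choose Suc i) / (x ^ (B + i + 1) * z ^ (C - i))) / x" for i
    using assms by (simp add: field_simps)
  then show ?thesis
    unfolding pf_zpart_def
    by (simp add: sum.lessThan_Suc_shift sum.distrib add_divide_distrib sum_divide_distrib
        algebra_simps del: sum.lessThan_Suc)
qed

lemma pf_ypart_Suc_Suc:
  assumes "x \<noteq> 0" "y \<noteq> 0"
  shows "pf_ypart x y (Suc B) (Suc C) = (pf_ypart x y (Suc B) C - pf_ypart x y B (Suc C)) / x"
proof -
  define t where "t B C u = (-1) ^ u * of_nat ((C + u - 1) choose u) / (x ^ (C + u) * y ^ (B - u))"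
    for B C u
  have t_Suc: "t (Suc B) (Suc C) (Suc u) = (t (Suc B) C (Suc u) - t B (Suc C) u) / x" for u
  proof -
    have "(C + u + 1) choose Suc u = ((C + u) choose u) + ((C + u) choose Suc u)"
      by simp
    moreover have "x ^ (C + u + 2) * y ^ (B - u) = x * (x ^ (C + u + 1) * y ^ (B - u))"
      by (simp add: eval_nat_numeral)
    moreover have "x ^ (C + u + 1) * y ^ (B - u) \<noteq> 0"
      using assms by simp
    ultimately show ?thesis
      using assms by (simp add: t_def field_simps)
  qed
  have t_0: "t (Suc B) (Suc C) 0 = t (Suc B) C 0 / x"
    by (simp add: t_def)
  have "pf_ypart x y B C = (\<Sum>u<B. t B C u)" for B C
    by (simp add: pf_ypart_def t_def)
  then show ?thesis
    by (simp only: sum.lessThan_Suc_shift t_Suc t_0 sum_divide_distrib[symmetric] sum_subtractf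
        add_divide_distrib diff_divide_distrib add_diff_eq)
qed

lemma inverse_pow_Suc_mult_pow_Suc:
  fixes x y :: "'a::field"
  assumes x: "x \<noteq> 0" and y: "y \<noteq> 0" and xy: "x + y \<noteq> 0"
  shows "1 / (y ^ Suc B * (x + y) ^ Suc C)
    = (1 / (y ^ Suc B * (x + y) ^ C) - 1 / (y ^ B * (x + y) ^ Suc C)) / x"
proof -
  define z d where "z = x + y" and "d = y ^ B * z ^ C"
  have "z \<noteq> 0" and "d \<noteq> 0"
    using y xy by (simp_all add: z_def d_def)
  then have "(1 / (y * d) - 1 / (z * d)) / x = (z - y) / (y * (z * d)) / x"
    using y by (simp add: field_simps)
  also have "\<dots> = 1 / (y * (z * d))"
    using x by (simp add: z_def)
  finally show ?thesis
    by (simp add: z_def[symmetric] d_def mult_ac)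
qed

lemma partial_fractions_binomial:
  fixes x y :: "'a::field"
  assumes x: "x \<noteq> 0" and y: "y \<noteq> 0" and xy: "x + y \<noteq> 0" and BC: "B + C \<noteq> 0"
  shows "1 / (y ^ B * (x + y) ^ C) = (-1) ^ B * pf_zpart x (x + y) B C + pf_ypart x y B C"
  using BC
proof (induction B arbitrary: C)
  case 0
  then obtain c where "C = Suc c"
    by (cases C) auto
  then show ?case
    by (simp add: pf_zpart_def pf_ypart_def sum.lessThan_Suc_shift binomial_eq_0
        del: sum.lessThan_Suc)
next
  case (Suc B)
  note IH_B = Suc.IH
  show ?case
  proof (induction C)
    case 0
    then show ?case
      by (simp add: pf_zpart_def pf_ypart_def sum.lessThan_Suc_shift binomial_eq_0
          del: sum.lessThan_Suc)
  next
    case (Suc C)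
    have "1 / (y ^ Suc B * (x + y) ^ Suc C)
        = (1 / (y ^ Suc B * (x + y) ^ C) - 1 / (y ^ B * (x + y) ^ Suc C)) / x"
      by (rule inverse_pow_Suc_mult_pow_Suc[OF x y xy])
    also have "\<dots> = (((-1) ^ Suc B * pf_zpart x (x + y) (Suc B) C + pf_ypart x y (Suc B) C)
        - ((-1) ^ B * pf_zpart x (x + y) B (Suc C) + pf_ypart x y B (Suc C))) / x"
      using Suc.IH IH_B[of "Suc C"] by simp
    also have "\<dots> = (-1) ^ Suc B * pf_zpart x (x + y) (Suc B) (Suc C) + pf_ypart x y (Suc B) (Suc C)"
      using x y xy by (simp add: pf_zpart_Suc_Suc pf_ypart_Suc_Suc field_simps)
    finally show ?case .
  qed
qed

lemma pf_zpart_split: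
  assumes "2 \<le> C"
  shows "pf_zpart x z B C = 1 / (x ^ B * z ^ C)
    + (\<Sum>i=1..C-2. of_nat ((B + i - 1) choose i) / (x ^ (B + i) * z ^ (C - i)))
    + of_nat ((B + C - 2) choose (C - 1)) / (x ^ (B + C - 1) * z)"
proof -
  obtain c where c: "C = Suc (Suc c)"
    using assms by (metis add_2_eq_Suc le_Suc_ex)
  define t where "t i = of_nat ((B + i - 1) choose i) / (x ^ (B + i) * z ^ (C - i))" for i
  have "pf_zpart x z B C = (\<Sum>i<C. t i)"
    unfolding pf_zpart_def t_def ..
  also have "\<dots> = t 0 + (\<Sum>i<c. t (Suc i)) + t (Suc c)"
    unfolding c sum.lessThan_Suc_shift[of t "Suc c"] sum.lessThan_Suc[of "\<lambda>i. t (Suc i)" c]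
    by (simp only: add.assoc)
  also have "(\<Sum>i<c. t (Suc i)) = (\<Sum>i=1..C-2. t i)"
    unfolding c One_nat_def sum.atLeast1_atMost_eq by simp
  finally show ?thesis
    by (simp add: t_def c)
qed

lemma pf_ypart_even_split:
  assumes r: "1 \<le> r" and C: "1 \<le> C"
  shows "pf_ypart x y (2 * r) C
    = (\<Sum>u<2 * r - 1. (-1) ^ u * of_nat ((C + u - 1) choose u) / (x ^ (C + u) * y ^ (2 * r - u)))
    - of_nat ((2 * r + C - 2) choose (C - 1)) / (x ^ (2 * r + C - 1) * y)"
proof -
  define q where "q = 2 * r - 1"
  define t where
    "t u = (-1) ^ u * of_nat ((C + u - 1) choose u) / (x ^ (C + u) * y ^ (2 * r - u))" for u
  have "pf_ypart x y (2 * r) C = (\<Sum>u<Suc q. t u)"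
    using r unfolding pf_ypart_def t_def q_def by simp
  also have "\<dots> = (\<Sum>u<q. t u) + t q"
    by (rule sum.lessThan_Suc)
  also have "t q = - of_nat ((2 * r + C - 2) choose (C - 1)) / (x ^ (2 * r + C - 1) * y)"
  proof -
    have "odd q"
      using r by (simp add: q_def)
    moreover have "C + q - 1 = 2 * r + C - 2" and "2 * r + C - 2 - q = C - 1"
      using C r by (simp_all add: q_def)
    then have "(C + q - 1) choose q = (2 * r + C - 2) choose (C - 1)"
      using binomial_symmetric[of q "2 * r + C - 2"] C by (simp add: q_def)
    moreover have "C + q = 2 * r + C - 1" and "2 * r - q = 1"
      using C r by (simp_all add: q_def)
    ultimately show ?thesis
      by (simp add: t_def)
  qed
  finally show ?thesis
    by (simp add: t_def q_def)
qed

lemma swap_difference_partial_fractions: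
  fixes x y :: "'a::field"
  assumes x: "x \<noteq> 0" and y: "y \<noteq> 0" and xy: "x + y \<noteq> 0" and r: "1 \<le> r" and C: "2 \<le> C"
  shows "1 / (y ^ (2 * r) * (x + y) ^ C) - 1 / (x ^ (2 * r) * (x + y) ^ C)
    = (\<Sum>i=1..C-2. of_nat ((2 * r + i - 1) choose i) / (x ^ (2 * r + i) * (x + y) ^ (C - i)))
    + (\<Sum>u<2 * r - 1. (-1) ^ u * of_nat ((C + u - 1) choose u) / (x ^ (C + u) * y ^ (2 * r - u)))
    - of_nat ((2 * r + C - 2) choose (C - 1)) / (x ^ (2 * r + C - 2) * y * (x + y))"
proof -
  have C1: "1 \<le> C"
    using C by simp
  define b :: 'a where "b = of_nat ((2 * r + C - 2) choose (C - 1))"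
  define X where "X = x ^ (2 * r + C - 2)"
  define z where "z = x + y"
  have "2 * r + C - 1 = Suc (2 * r + C - 2)"
    using C by simp
  then have "X \<noteq> 0" and "z \<noteq> 0" and "x ^ (2 * r + C - 1) = x * X"
    using x xy by (simp_all add: X_def z_def)
  then have "b / (x ^ (2 * r + C - 1) * z) - b / (x ^ (2 * r + C - 1) * y)
      = b * (y - z) / (x * X * y * z)"
    using x y by (simp add: field_simps)
  also have "\<dots> = - (b / (X * y * z))"
    using x by (simp add: z_def)
  finally have ends: "b / (x ^ (2 * r + C - 1) * z) - b / (x ^ (2 * r + C - 1) * y)
      = - (b / (X * y * z))" .
  have "1 / (y ^ (2 * r) * z ^ C) = pf_zpart x z (2 * r) C + pf_ypart x y (2 * r) C"
    using partial_fractions_binomial[OF x y xy, of "2 * r" C] r by (simp add: z_def)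
  then have "1 / (y ^ (2 * r) * z ^ C) - 1 / (x ^ (2 * r) * z ^ C)
      = (\<Sum>i=1..C-2. of_nat ((2 * r + i - 1) choose i) / (x ^ (2 * r + i) * z ^ (C - i)))
      + (\<Sum>u<2 * r - 1. (-1) ^ u * of_nat ((C + u - 1) choose u) / (x ^ (C + u) * y ^ (2 * r - u)))
      + (b / (x ^ (2 * r + C - 1) * z) - b / (x ^ (2 * r + C - 1) * y))"
    unfolding pf_zpart_split[OF C] pf_ypart_even_split[OF r C1] b_def by simp
  then show ?thesis
    unfolding ends z_def[symmetric] X_def[symmetric] b_def[symmetric] by simp
qed

lemma inverse_gap_antisym:
  fixes x y :: "'a::field"
  assumes x: "x \<noteq> 0" and y: "y \<noteq> 0" and xy: "x \<noteq> y"
  shows "1 / (x ^ Suc m * y * (y - x)) + 1 / (y ^ Suc m * x * (x - y))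
    = (\<Sum>j<m. 1 / (x ^ (j + 2) * y ^ (m + 1 - j)))"
proof -
  have "y - x \<noteq> 0" "x - y \<noteq> 0"
    using xy by simp_all
  note nonzero = x y this
  show ?thesis
  proof (induction m)
    case 0
    show ?case
      using nonzero by (simp add: field_simps del: right_minus_eq)
  next
    case (Suc m)
    have step: "1 / (x * a * y * d) = 1 / (a * y * d) / y + 1 / (x * a * y ^ 2)"
      if "a \<noteq> 0" "d \<noteq> 0" "d = y - x" for a d :: 'a
    proof -
      have "1 / (a * y * d) / y + 1 / (x * a * y ^ 2) = (x + d) / (x * a * y ^ 2 * d)"
        using that(1,2) x y by (simp add: field_simps power2_eq_square)
      also have "\<dots> = 1 / (x * a * y * d)"
        using that(1,2) x y by (simp add: that(3) power2_eq_square)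
      finally show ?thesis ..
    qed
    have "1 / (x ^ Suc (Suc m) * y * (y - x)) + 1 / (y ^ Suc (Suc m) * x * (x - y))
        = (1 / (x ^ Suc m * y * (y - x)) + 1 / (y ^ Suc m * x * (x - y))) / y
          + 1 / (x ^ (m + 2) * y ^ 2)"
      using step[of "x ^ Suc m" "y - x"] nonzero
      by (simp add: add_divide_distrib power2_eq_square mult_ac)
    also have "\<dots> = (\<Sum>j<m. 1 / (x ^ (j + 2) * y ^ (m + 1 - j))) / y + 1 / (x ^ (m + 2) * y ^ 2)"
      by (simp only: Suc.IH)
    also have "(\<Sum>j<m. 1 / (x ^ (j + 2) * y ^ (m + 1 - j))) / y
        = (\<Sum>j<m. 1 / (x ^ (j + 2) * y ^ (Suc m + 1 - j)))"
      unfolding sum_divide_distrib by (rule sum.cong) (simp_all add: Suc_diff_le mult_ac)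
    finally show ?case
      by simp
  qed
qed

lemma sum_lessThan_double:
  fixes f :: "nat \<Rightarrow> 'a::comm_monoid_add"
  shows "(\<Sum>j<2 * M. f j) = (\<Sum>q<M. f (2 * q) + f (2 * q + 1))"
  by (induction M) (simp_all add: add.assoc)

lemma sum_reflected_products:
  fixes g :: "nat \<Rightarrow> 'a::comm_semiring_1"
  shows "(\<Sum>j<2 * M. g (j + 2) * g (2 * M + 1 - j))
    = 2 * (\<Sum>j=1..M. g (2 * j) * g (2 * M + 2 - 2 * j + 1))"
proof -
  define f where "f j = g (j + 2) * g (2 * M + 1 - j)" for j
  have "(\<Sum>q<M. f (2 * q + 1)) = (\<Sum>q<M. f (2 * (M - Suc q) + 1))"
    by (rule sum.nat_diff_reindex[symmetric])
  also have "\<dots> = (\<Sum>q<M. f (2 * q))"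
  proof (rule sum.cong)
    fix q
    assume "q \<in> {..<M}"
    then have "2 * (M - Suc q) + 1 + 2 = 2 * M + 1 - 2 * q"
      and "2 * M + 1 - (2 * (M - Suc q) + 1) = 2 * q + 2"
      by auto
    then show "f (2 * (M - Suc q) + 1) = f (2 * q)"
      by (simp add: f_def mult.commute)
  qed simp
  finally have odd_eq_even: "(\<Sum>q<M. f (2 * q + 1)) = (\<Sum>q<M. f (2 * q))" .
  have "(\<Sum>j<2 * M. f j) = 2 * (\<Sum>q<M. f (2 * q))"
    unfolding sum_lessThan_double sum.distrib odd_eq_even by (rule mult_2[symmetric])
  also have "(\<Sum>q<M. f (2 * q)) = (\<Sum>j=1..M. g (2 * j) * g (2 * M + 2 - 2 * j + 1))"
    unfolding One_nat_def sum.atLeast1_atMost_eq by (auto simp: f_def Suc_diff_le intro!: sum.cong)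
  finally show ?thesis
    by (simp add: f_def)
qed

lemma telescope_sums_shift:
  fixes f :: "nat \<Rightarrow> 'a::real_normed_vector"
  assumes "f \<longlonglongrightarrow> 0"
  shows "(\<lambda>n. f n - f (n + m)) sums (\<Sum>j<m. f j)"
proof -
  define F where "F n = (\<Sum>j<m. f (n + j))" for n
  have "F \<longlonglongrightarrow> 0"
    unfolding F_def using LIMSEQ_ignore_initial_segment[OF assms]
    by (intro tendsto_null_sum) (simp add: add.commute)
  from telescope_sums'[OF this] have "(\<lambda>n. F n - F (Suc n)) sums F 0"
    by simp
  moreover have "F n - F (Suc n) = f n - f (n + m)" for n
    unfolding F_def by (induction m) (simp_all add: algebra_simps)
  ultimately show ?thesis
    by (simp add: F_def)
qed

lemma has_sum_diff:
  fixes f g :: "'a \<Rightarrow> 'b::topological_ab_group_add"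
  assumes "(f has_sum a) A" and "(g has_sum b) A"
  shows "((\<lambda>x. f x - g x) has_sum a - b) A"
proof -
  have "((\<lambda>x. - g x) has_sum - b) A"
    using assms(2) by (simp add: has_sum_uminus)
  from has_sum_add[OF assms(1) this] show ?thesis
    by simp
qed

lemma has_sum_sum:
  fixes f :: "'i \<Rightarrow> 'a \<Rightarrow> 'b::topological_comm_monoid_add"
  assumes "finite I" and "\<And>i. i \<in> I \<Longrightarrow> (f i has_sum s i) A"
  shows "((\<lambda>x. \<Sum>i\<in>I. f i x) has_sum (\<Sum>i\<in>I. s i)) A"
  using assms by (induction I rule: finite_induct) (auto intro: has_sum_add)

lemma has_sum_product_nonneg:
  fixes f g :: "'a \<Rightarrow> real"
  assumes f: "(f has_sum a) A" and g: "(g has_sum b) B"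
    and "\<And>x. x \<in> A \<Longrightarrow> 0 \<le> f x" and "\<And>y. y \<in> B \<Longrightarrow> 0 \<le> g y"
  shows "((\<lambda>(x, y). f x * g y) has_sum a * b) (A \<times> B)"
proof -
  have inner: "((\<lambda>y. f x * g y) has_sum f x * b) B" for x
    by (rule has_sum_cmult_right[OF g])
  have outer: "((\<lambda>x. f x * b) has_sum a * b) A"
    by (rule has_sum_cmult_left[OF f])
  have summable: "(\<lambda>(x, y). f x * g y) summable_on A \<times> B"
    using inner outer assms(3,4) by (intro summable_on_SigmaI[where g = "\<lambda>x. f x * b"])
      (auto simp: summable_on_def)
  show ?thesis
    by (rule has_sum_SigmaI[OF _ outer summable]) (use inner in simp)
qed

section \<open>Sums over pairs of odd numbers\<close>

definition odd_num :: "nat \<Rightarrow> real" where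
  "odd_num k = 2 * real k + 1"

lemma odd_num_ge_1: "1 \<le> odd_num k"
  by (simp add: odd_num_def)

lemma odd_num_pos [simp]: "0 < odd_num k"
  by (simp add: odd_num_def)

lemma odd_num_nonneg [simp]: "0 \<le> odd_num k"
  by (simp add: odd_num_def)

lemma odd_num_neq_0 [simp]: "odd_num k \<noteq> 0"
  by (simp add: odd_num_def)

definition lambda_odd :: "nat \<Rightarrow> real" where
  "lambda_odd n = (\<Sum>k. 1 / odd_num k ^ n)"

lemma lambdaDir_eq_lambda_odd: "lambdaDir (real n) = lambda_odd n"
proof -
  have "2 * real (Suc k) - 1 = odd_num k" for k
    by (simp add: odd_num_def)
  then show ?thesis
    unfolding lambdaDir_def lambda_odd_def by (simp add: powr_realpow)
qed

lemma summable_inverse_odd_power: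
  assumes "2 \<le> n"
  shows "summable (\<lambda>k. 1 / odd_num k ^ n)"
proof (rule summable_comparison_test)
  have "summable (\<lambda>k. inverse (real k ^ n))"
    using inverse_power_summable[of n] assms by simp
  then show "summable (\<lambda>k. inverse (real (Suc k) ^ n))"
    by (subst summable_Suc_iff)
  show "\<exists>N. \<forall>k\<ge>N. norm (1 / odd_num k ^ n) \<le> inverse (real (Suc k) ^ n)"
    by (auto simp: odd_num_def divide_inverse intro!: le_imp_inverse_le power_mono)
qed

lemma has_sum_lambda_odd:
  assumes "2 \<le> n"
  shows "((\<lambda>k. 1 / odd_num k ^ n) has_sum lambda_odd n) UNIV"
  unfolding lambda_odd_def
  using summable_inverse_odd_power[OF assms] by (intro sums_nonneg_imp_has_sum) auto

lemma has_sum_odd_pairs: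
  assumes "2 \<le> a" and "2 \<le> b"
  shows "((\<lambda>(k, l). 1 / (odd_num k ^ a * odd_num l ^ b)) has_sum lambda_odd a * lambda_odd b) UNIV"
  using has_sum_product_nonneg[OF has_sum_lambda_odd[OF assms(1)] has_sum_lambda_odd[OF assms(2)]]
  by simp

lemma summable_on_odd_pairs:
  assumes "\<And>k l. \<bar>h (k, l)\<bar> \<le> c / (odd_num k ^ 2 * odd_num l ^ 2)"
  shows "h summable_on UNIV"
proof -
  have "(\<lambda>p. c * (\<lambda>(k, l). 1 / (odd_num k ^ 2 * odd_num l ^ 2)) p) summable_on UNIV"
    using has_sum_odd_pairs[of 2 2] by (intro summable_on_cmult_right) (auto simp: summable_on_def)
  then have "(\<lambda>p. norm (h p)) summable_on UNIV"
    by (rule summable_on_comparison_test) (use assms in auto)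
  then show ?thesis
    using summable_on_iff_abs_summable_on_real by blast
qed

lemma has_sum_odd_pairs_off_diagonal:
  assumes a: "2 \<le> a" and b: "2 \<le> b"
  shows "((\<lambda>(k, l). if k = l then 0 else 1 / (odd_num k ^ a * odd_num l ^ b))
    has_sum lambda_odd a * lambda_odd b - lambda_odd (a + b)) UNIV"
proof -
  have "((\<lambda>(k, l). 1 / odd_num k ^ (a + b)) has_sum lambda_odd (a + b)) (range (\<lambda>k. (k, k)))"
    using has_sum_lambda_odd[of "a + b"] a by (subst has_sum_reindex) (auto simp: inj_on_def o_def)
  then have diagonal: "((\<lambda>(k, l). if k = l then 1 / odd_num k ^ (a + b) else 0)
      has_sum lambda_odd (a + b)) UNIV"
    by (rule has_sum_cong_neutral[THEN iffD1, rotated -1]) auto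
  have "((\<lambda>p. (\<lambda>(k, l). 1 / (odd_num k ^ a * odd_num l ^ b)) p
      - (\<lambda>(k, l). if k = l then 1 / odd_num k ^ (a + b) else 0) p)
      has_sum lambda_odd a * lambda_odd b - lambda_odd (a + b)) UNIV"
    by (rule has_sum_diff[OF has_sum_odd_pairs[OF a b] diagonal])
  then show ?thesis
    by (simp add: case_prod_unfold if_distrib power_add cong: if_cong)
qed

lemma oddHarm_Suc_eq: "oddHarm t (Suc n) = (\<Sum>k\<le>n. 1 / odd_num k ^ t)"
proof -
  have "oddHarm t (Suc n) = (\<Sum>k=0..n. 1 / (2 * real (Suc k) - 1) ^ t)"
    unfolding oddHarm_def One_nat_def by (rule sum.shift_bounds_cl_Suc_ivl)
  then show ?thesis
    by (simp add: odd_num_def atLeast0AtMost add.commute)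
qed

lemma sigma_term_le:
  assumes s: "2 \<le> s" and t: "2 \<le> t"
  shows "1 / (odd_num k ^ t * (odd_num k + odd_num l) ^ s) \<le> 1 / (odd_num k ^ 2 * odd_num l ^ 2)"
proof -
  have "odd_num k ^ 2 \<le> odd_num k ^ t"
    by (rule power_increasing[OF t odd_num_ge_1])
  moreover have "odd_num l ^ 2 \<le> (odd_num k + odd_num l) ^ s"
  proof -
    have "odd_num l ^ 2 \<le> (odd_num k + odd_num l) ^ 2"
      by (rule power_mono) auto
    also have "\<dots> \<le> (odd_num k + odd_num l) ^ s"
      using odd_num_ge_1[of k] odd_num_nonneg[of l] by (intro power_increasing[OF s]) linarith
    finally show ?thesis .
  qed
  moreover have "0 < odd_num k + odd_num l"
    by (simp add: add_pos_pos)
  ultimately show ?thesis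
    by (auto intro!: divide_left_mono mult_mono mult_pos_pos)
qed

lemma has_sum_sigmaOdd:
  assumes s: "2 \<le> s" and t: "2 \<le> t"
  shows "((\<lambda>(k, l). 1 / (odd_num k ^ t * (odd_num k + odd_num l) ^ s))
    has_sum sigmaOdd s t / 2 ^ s) UNIV"
proof -
  define g where "g = (\<lambda>(k, l). 1 / (odd_num k ^ t * (odd_num k + odd_num l) ^ s))"
  have "\<bar>g (k, l)\<bar> \<le> 1 / (odd_num k ^ 2 * odd_num l ^ 2)" for k l
    using sigma_term_le[OF s t] by (simp add: g_def)
  then have "g summable_on UNIV"
    by (intro summable_on_odd_pairs[of _ 1]) simp
  then have g_has_sum: "(g has_sum infsum g UNIV) UNIV"
    by simp
  define S where "S = infsum g UNIV"
  \<comment> \<open>Group the pairs by n = k + l; then odd_num k + odd_num l = 2 (n + 1).\<close>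
  define h where "h = (\<lambda>(n, k). g (k, n - k))"
  have by_diagonals: "(h has_sum S) (Sigma UNIV (\<lambda>n. {..n}))"
    using g_has_sum unfolding S_def
    by (rule has_sum_reindex_bij_witness[where j = "\<lambda>(k, l). (k + l, k)"
          and i = "\<lambda>(n, k). (k, n - k)", THEN iffD1, rotated -1]) (auto simp: h_def)
  have "((\<lambda>k. h (n, k)) has_sum oddHarm t (Suc n) / (2 ^ s * real (Suc n) ^ s)) {..n}" for n
  proof (rule has_sum_finiteI)
    have sum_eq: "odd_num k + odd_num (n - k) = 2 * real (Suc n)" if "k \<le> n" for k
      using that by (simp add: odd_num_def)
    show "oddHarm t (Suc n) / (2 ^ s * real (Suc n) ^ s) = (\<Sum>k\<le>n. h (n, k))"
      unfolding oddHarm_Suc_eq sum_divide_distrib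
      by (rule sum.cong) (simp_all add: h_def g_def sum_eq power_mult_distrib del: of_nat_Suc)
  qed simp
  then have "((\<lambda>n. oddHarm t (Suc n) / (2 ^ s * real (Suc n) ^ s)) has_sum S) UNIV"
    by (intro has_sum_SigmaD[OF by_diagonals]) simp
  then have "(\<lambda>n. 2 ^ s * (oddHarm t (Suc n) / (2 ^ s * real (Suc n) ^ s))) sums (2 ^ s * S)"
    by (intro sums_mult has_sum_imp_sums)
  then have "(\<lambda>n. oddHarm t (Suc n) / real (Suc n) ^ s) sums (2 ^ s * S)"
    by simp
  then have "sigmaOdd s t = 2 ^ s * S"
    unfolding sigmaOdd_def by (rule sums_unique[symmetric])
  then show ?thesis
    using g_has_sum by (simp add: g_def S_def)
qed

section \<open>The double sum of 1 / (x^n y (x + y)) over odd x, y\<close>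

(*
  The shift l \<mapsto> l + 2k + 1 carries odd_num l - odd_num k to odd_num l + odd_num k, so the
  series telescopes; the 2k + 1 leftover terms cancel under j \<mapsto> 2k - j.
*)
lemma sums_odd_num_gap_differences:
  "(\<lambda>l. (if l = k then 0 else 1 / (odd_num l - odd_num k)) - 1 / (odd_num l + odd_num k)) sums 0"
proof -
  define f where "f j = (if j = k then 0 else 1 / (odd_num j - odd_num k))" for j
  have "(\<lambda>j. f (j + Suc k)) \<longlonglongrightarrow> 0"
  proof -
    have "(\<lambda>j. f (j + Suc k)) = (\<lambda>j. inverse (real (Suc j)) / 2)"
      by (simp add: f_def odd_num_def field_simps)
    then show ?thesis
      using tendsto_divide_zero[OF LIMSEQ_inverse_real_of_nat, of 2] by metis
  qed
  then have "f \<longlonglongrightarrow> 0"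
    by (rule LIMSEQ_offset)
  from telescope_sums_shift[OF this, of "2 * k + 1"]
  have "(\<lambda>l. f l - f (l + (2 * k + 1))) sums (\<Sum>j<2 * k + 1. f j)" .
  moreover have "(\<Sum>j<2 * k + 1. f j) = 0"
  proof -
    have reflect: "f (2 * k - j) = - f j" if "j \<le> 2 * k" for j
      using that by (cases "j = k") (auto simp: f_def odd_num_def of_nat_diff field_simps)
    have "(\<Sum>j<2 * k + 1. f j) = (\<Sum>j<2 * k + 1. f (2 * k + 1 - Suc j))"
      by (rule sum.nat_diff_reindex[symmetric])
    also have "\<dots> = - (\<Sum>j<2 * k + 1. f j)"
      unfolding sum_negf[symmetric] by (rule sum.cong) (auto simp: reflect)
    finally show ?thesis
      by simp
  qed
  moreover have "f (l + (2 * k + 1)) = 1 / (odd_num l + odd_num k)" for l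
    by (simp add: f_def odd_num_def algebra_simps)
  ultimately show ?thesis
    by (simp add: f_def add.commute)
qed

definition mixed_term :: "nat \<Rightarrow> nat \<times> nat \<Rightarrow> real" where
  "mixed_term n = (\<lambda>(k, l). 1 / (odd_num k ^ n * odd_num l * (odd_num k + odd_num l)))"

definition gap_term :: "nat \<Rightarrow> nat \<times> nat \<Rightarrow> real" where
  "gap_term n = (\<lambda>(k, l).
    if k = l then 0 else 1 / (odd_num k ^ n * odd_num l * (odd_num l - odd_num k)))"

lemma summable_on_mixed_term:
  assumes "2 \<le> n"
  shows "mixed_term n summable_on UNIV"
proof (rule summable_on_odd_pairs[of _ 1])
  fix k l
  have "odd_num k ^ 2 \<le> odd_num k ^ n"
    by (rule power_increasing[OF assms odd_num_ge_1])
  moreover have "odd_num l ^ 2 \<le> odd_num l * (odd_num k + odd_num l)"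
    by (simp add: power2_eq_square)
  moreover have "0 < odd_num k + odd_num l"
    by (simp add: add_pos_pos)
  ultimately show "\<bar>mixed_term n (k, l)\<bar> \<le> 1 / (odd_num k ^ 2 * odd_num l ^ 2)"
    by (auto simp: mixed_term_def mult.assoc intro!: divide_left_mono mult_mono mult_pos_pos)
qed

lemma le_twice_mult_abs_diff:
  fixes x y :: real
  assumes "1 \<le> x" and "1 \<le> \<bar>y - x\<bar>"
  shows "y \<le> 2 * x * \<bar>y - x\<bar>"
proof -
  have "x \<le> x * \<bar>y - x\<bar>" and "\<bar>y - x\<bar> \<le> x * \<bar>y - x\<bar>"
    using assms by (simp_all add: mult_le_cancel_left1 mult_le_cancel_right1)
  then show ?thesis
    by linarith
qed

lemma summable_on_gap_term:
  assumes "3 \<le> n"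
  shows "gap_term n summable_on UNIV"
proof (rule summable_on_odd_pairs[of _ 2])
  fix k l
  show "\<bar>gap_term n (k, l)\<bar> \<le> 2 / (odd_num k ^ 2 * odd_num l ^ 2)"
  proof (cases "k = l")
    case False
    define x y where "x = odd_num k" and "y = odd_num l"
    have x: "1 \<le> x" and y: "0 < y"
      by (simp_all add: x_def y_def odd_num_ge_1)
    have gap: "1 \<le> \<bar>y - x\<bar>"
      using False by (auto simp: x_def y_def odd_num_def)
    have "x ^ 2 * y ^ 2 \<le> x ^ 2 * y * (2 * x * \<bar>y - x\<bar>)"
      using mult_left_mono[OF le_twice_mult_abs_diff[OF x gap], of "x ^ 2 * y"] x y
      by (simp add: power2_eq_square mult_ac)
    also have "\<dots> = 2 * (x ^ 3 * y * \<bar>y - x\<bar>)"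
      by (simp add: power2_eq_square power3_eq_cube)
    also have "\<dots> \<le> 2 * (x ^ n * y * \<bar>y - x\<bar>)"
      using power_increasing[OF assms x] y by (simp add: mult_right_mono)
    finally have "x ^ 2 * y ^ 2 \<le> 2 * (x ^ n * y * \<bar>y - x\<bar>)" .
    moreover have "0 < x ^ 2 * y ^ 2" and "0 < x ^ n * y * \<bar>y - x\<bar>"
      using x y gap by auto
    moreover have "1 / D \<le> 2 / E" if "0 < D" "0 < E" "E \<le> 2 * D" for D E :: real
      using that by (simp add: field_simps)
    ultimately have "1 / (x ^ n * y * \<bar>y - x\<bar>) \<le> 2 / (x ^ 2 * y ^ 2)"
      by blast
    then show ?thesis
      using False x y by (simp add: gap_term_def x_def[symmetric] y_def[symmetric] abs_mult)
  qed (simp add: gap_term_def)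
qed

lemma mixed_plus_gap_term:
  "mixed_term n (k, l) + gap_term n (k, l) = 1 / odd_num k ^ Suc n *
    ((if l = k then 1 / odd_num k else 0)
     + ((if l = k then 0 else 1 / (odd_num l - odd_num k)) - 1 / (odd_num l + odd_num k)))"
proof (cases "l = k")
  case True
  then show ?thesis
    by (simp add: mixed_term_def gap_term_def field_simps)
next
  case False
  define x y where "x = odd_num k" and "y = odd_num l"
  define s d where "s = x + y" and "d = y - x"
  have nonzero: "x \<noteq> 0" "y \<noteq> 0" "s \<noteq> 0" "d \<noteq> 0"
    using False by (auto simp: x_def y_def s_def d_def odd_num_def add_pos_pos)
  have sd: "d + s = 2 * y" "s - d = 2 * x"
    by (simp_all add: s_def d_def)
  have "1 / (x ^ n * y * s) + 1 / (x ^ n * y * d) = (d + s) / (x ^ n * y * s * d)"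
    using nonzero by (simp add: field_simps)
  also have "\<dots> = (s - d) / (x ^ Suc n * s * d)"
    unfolding sd using nonzero by simp
  also have "\<dots> = 1 / x ^ Suc n * (1 / d - 1 / s)"
    using nonzero by (simp add: field_simps)
  finally show ?thesis
    using False
    by (simp add: mixed_term_def gap_term_def x_def[symmetric] y_def[symmetric] s_def d_def
        add.commute)
qed

lemma infsum_mixed_plus_gap:
  assumes "3 \<le> n"
  shows "infsum (mixed_term n) UNIV + infsum (gap_term n) UNIV = lambda_odd (n + 2)"
proof -
  define h where "h p = mixed_term n p + gap_term n p" for p
  have h_has_sum: "(h has_sum infsum (mixed_term n) UNIV + infsum (gap_term n) UNIV) (UNIV \<times> UNIV)"
    unfolding h_def using assms summable_on_mixed_term[of n] summable_on_gap_term[of n]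
    by (intro has_sum_add) auto
  have row: "((\<lambda>l. h (k, l)) has_sum 1 / odd_num k ^ (n + 2)) UNIV" for k
  proof -
    have "(\<lambda>(k, l). h (k, l)) summable_on Sigma UNIV (\<lambda>_. UNIV)"
      using h_has_sum by (auto simp: summable_on_def)
    from summable_on_SigmaD1[OF this] obtain S where S: "((\<lambda>l. h (k, l)) has_sum S) UNIV"
      by (auto simp: summable_on_def)
    have "(\<lambda>l. if l = k then 1 / odd_num k else 0) sums (1 / odd_num k)"
      by (rule sums_single)
    from sums_mult[OF sums_add[OF this sums_odd_num_gap_differences[of k]],
        of "1 / odd_num k ^ Suc n"]
    have "(\<lambda>l. h (k, l)) sums (1 / odd_num k ^ (n + 2))"
      by (simp add: h_def mixed_plus_gap_term mult_ac)
    with has_sum_imp_sums[OF S] have "S = 1 / odd_num k ^ (n + 2)"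
      by (rule sums_unique2)
    with S show ?thesis
      by simp
  qed
  have "((\<lambda>k. 1 / odd_num k ^ (n + 2))
      has_sum infsum (mixed_term n) UNIV + infsum (gap_term n) UNIV) UNIV"
    by (rule has_sum_SigmaD[OF h_has_sum row])
  then show ?thesis
    using has_sum_lambda_odd[of "n + 2"] has_sum_unique by auto
qed

lemma gap_term_antisym:
  "gap_term (Suc m) (k, l) + gap_term (Suc m) (l, k)
    = (\<Sum>j<m. if k = l then 0 else 1 / (odd_num k ^ (j + 2) * odd_num l ^ (m + 1 - j)))"
proof (cases "k = l")
  case False
  then have "odd_num k \<noteq> odd_num l"
    by (simp add: odd_num_def)
  with False show ?thesis
    using inverse_gap_antisym[of "odd_num k" "odd_num l" m] by (simp add: gap_term_def)
qed (simp add: gap_term_def)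

lemma infsum_gap_term:
  assumes "2 \<le> m"
  shows "2 * infsum (gap_term (Suc m)) UNIV
    = (\<Sum>j<m. lambda_odd (j + 2) * lambda_odd (m + 1 - j) - lambda_odd (m + 3))"
proof -
  define G where "G = infsum (gap_term (Suc m)) UNIV"
  have G: "(gap_term (Suc m) has_sum G) (UNIV \<times> UNIV)"
    using summable_on_gap_term[of "Suc m"] assms by (simp add: G_def)
  then have G_swap: "((\<lambda>(k, l). gap_term (Suc m) (l, k)) has_sum G) (UNIV \<times> UNIV)"
    by (rule has_sum_swap[THEN iffD1])
  define off where
    "off j = (\<lambda>(k, l). if k = l then 0 else 1 / (odd_num k ^ (j + 2) * odd_num l ^ (m + 1 - j)))"
    for j
  from has_sum_add[OF G G_swap] have "((\<lambda>p. \<Sum>j<m. off j p) has_sum 2 * G) UNIV"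
    by (simp add: case_prod_unfold off_def gap_term_antisym[symmetric])
  moreover have "((\<lambda>p. \<Sum>j<m. off j p)
      has_sum (\<Sum>j<m. lambda_odd (j + 2) * lambda_odd (m + 1 - j) - lambda_odd (m + 3))) UNIV"
  proof (rule has_sum_sum)
    fix j
    assume "j \<in> {..<m}"
    then have "j + 2 + (m + 1 - j) = m + 3" and "2 \<le> m + 1 - j"
      by auto
    then show "(off j has_sum lambda_odd (j + 2) * lambda_odd (m + 1 - j) - lambda_odd (m + 3))
        UNIV"
      using has_sum_odd_pairs_off_diagonal[of "j + 2" "m + 1 - j"]
      by (simp add: off_def numeral_3_eq_3)
  qed simp
  ultimately show ?thesis
    unfolding G_def by (rule has_sum_unique)
qed

lemma infsum_mixed_term_odd:
  assumes "1 \<le> M"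
  shows "infsum (mixed_term (2 * M + 1)) UNIV
    = real (M + 1) * lambda_odd (2 * M + 3)
      - (\<Sum>j=1..M. lambda_odd (2 * j) * lambda_odd (2 * M + 2 - 2 * j + 1))"
proof -
  define S where "S = (\<Sum>j=1..M. lambda_odd (2 * j) * lambda_odd (2 * M + 2 - 2 * j + 1))"
  have "2 * infsum (gap_term (2 * M + 1)) UNIV
      = (\<Sum>j<2 * M. lambda_odd (j + 2) * lambda_odd (2 * M + 1 - j))
        - real (2 * M) * lambda_odd (2 * M + 3)"
    using infsum_gap_term[of "2 * M"] assms by (simp add: sum_subtractf)
  also have "\<dots> = 2 * S - 2 * real M * lambda_odd (2 * M + 3)"
    unfolding S_def sum_reflected_products by simp
  finally have "infsum (gap_term (2 * M + 1)) UNIV = S - real M * lambda_odd (2 * M + 3)"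
    by simp
  moreover have "infsum (mixed_term (2 * M + 1)) UNIV + infsum (gap_term (2 * M + 1)) UNIV
      = lambda_odd (2 * M + 3)"
    using infsum_mixed_plus_gap[of "2 * M + 1"] assms by (simp add: numeral_3_eq_3)
  ultimately show ?thesis
    by (simp add: S_def algebra_simps)
qed

lemma power_pred_mult_eq:
  fixes a b :: "'a::field"
  assumes "b \<noteq> 0" and "1 \<le> i" and "i \<le> n"
  shows "b ^ (i - 1) * a = b ^ n * a / b ^ (n + 1 - i)"
proof -
  have "i - 1 + (n + 1 - i) = n"
    using assms(2,3) by simp
  then have "b ^ n = b ^ (i - 1) * b ^ (n + 1 - i)"
    by (simp only: power_add[symmetric])
  then show ?thesis
    using assms(1) by simp
qed

lemma sigma_lambda_mixed_identity:
  assumes v: "1 \<le> v" and r: "1 \<le> r"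
  shows "(\<Sum>i=1..2 * v - 1. real ((2 * r + i - 1) choose i)
        * (sigmaOdd (2 * v + 1 - i) (2 * r + i) / 2 ^ (2 * v + 1 - i)))
    + (\<Sum>u<2 * r - 1. (-1) ^ u * real ((2 * v + u) choose u)
        * (lambda_odd (2 * v + 1 + u) * lambda_odd (2 * r - u)))
    = real ((2 * r + 2 * v - 1) choose (2 * v)) * infsum (mixed_term (2 * r + 2 * v - 1)) UNIV"
    (is "?X1 + ?X2 = ?c * ?F")
proof -
  define P where "P = (\<lambda>(k, l). 1 / (odd_num k ^ (2 * r) * (odd_num k + odd_num l) ^ (2 * v + 1)))"
  define sigma_pair where
    "sigma_pair i =
      (\<lambda>(k, l). 1 / (odd_num k ^ (2 * r + i) * (odd_num k + odd_num l) ^ (2 * v + 1 - i)))"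
    for i
  define lambda_pair where
    "lambda_pair u = (\<lambda>(k, l). 1 / (odd_num k ^ (2 * v + 1 + u) * odd_num l ^ (2 * r - u)))" for u
  have P: "(P has_sum sigmaOdd (2 * v + 1) (2 * r) / 2 ^ (2 * v + 1)) (UNIV \<times> UNIV)"
    unfolding P_def using has_sum_sigmaOdd[of "2 * v + 1" "2 * r"] v r by simp
  from has_sum_diff[OF has_sum_swap[THEN iffD1, OF P] P]
  have swap_diff: "((\<lambda>p. (\<lambda>(k, l). P (l, k)) p - P p) has_sum 0) UNIV"
    by simp
  have expansion: "(\<lambda>(k, l). P (l, k)) p - P p
      = (\<Sum>i=1..2 * v - 1. real ((2 * r + i - 1) choose i) * sigma_pair i p)
      + (\<Sum>u<2 * r - 1. (-1) ^ u * real ((2 * v + u) choose u) * lambda_pair u p)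
      - ?c * mixed_term (2 * r + 2 * v - 1) p" for p
  proof (cases p)
    case (Pair k l)
    have "odd_num k + odd_num l \<noteq> 0"
      by (simp add: odd_num_def)
    from swap_difference_partial_fractions[OF odd_num_neq_0 odd_num_neq_0 this r, of "2 * v + 1"]
    show ?thesis
      using v by (simp add: Pair P_def sigma_pair_def lambda_pair_def mixed_term_def add.commute)
  qed
  have "((\<lambda>p. (\<lambda>(k, l). P (l, k)) p - P p) has_sum ?X1 + ?X2 - ?c * ?F) UNIV"
    unfolding expansion
  proof (intro has_sum_diff has_sum_add has_sum_sum has_sum_cmult_right)
    fix i
    assume "i \<in> {1..2 * v - 1}"
    then show "(sigma_pair i has_sum sigmaOdd (2 * v + 1 - i) (2 * r + i) / 2 ^ (2 * v + 1 - i))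
        UNIV"
      unfolding sigma_pair_def using r by (intro has_sum_sigmaOdd) auto
  next
    fix u
    assume "u \<in> {..<2 * r - 1}"
    then show "(lambda_pair u has_sum lambda_odd (2 * v + 1 + u) * lambda_odd (2 * r - u)) UNIV"
      unfolding lambda_pair_def using v by (intro has_sum_odd_pairs) auto
  next
    show "(mixed_term (2 * r + 2 * v - 1) has_sum ?F) UNIV"
      using summable_on_mixed_term[of "2 * r + 2 * v - 1"] v r by simp
  qed simp_all
  with swap_diff have "?X1 + ?X2 - ?c * ?F = 0"
    by (rule has_sum_unique[symmetric])
  then show ?thesis
    by simp
qed

theorem mainTheorem13:
  fixes v r :: nat
  assumes "v \<ge> 1" and "r \<ge> 1"
  shows "(\<Sum>i=1..2* v-1. (2::real)^(i-1) * real ((2* r+i-1) choose i) * sigmaOdd (2* v+1-i) (2* r+i))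
    + 2^(2* v) * (\<Sum>j=0..2* r-2. (-1)^j * real ((2* v+j) choose j)
         * lambdaDir (real (2* v+1+j)) * lambdaDir (real (2* r-j)))
    - 2^(2* v) * real ((2* v+2* r-1) choose (2* v)) * real (v+r) * lambdaDir (real (2* v+2* r+1))
    + 2^(2* v) * real ((2* v+2* r-1) choose (2* v))
       * (\<Sum>j=1..r+v-1. lambdaDir (real (2*j)) * lambdaDir (real (2* r+2* v-2*j+1))) = 0"
proof -
  note v = assms(1) and r = assms(2)
  have M: "1 \<le> r + v - 1"
    using v r by simp
  have "2 * (r + v - 1) + 1 = 2 * r + 2 * v - 1" "2 * (r + v - 1) + 2 = 2 * r + 2 * v"
    "2 * (r + v - 1) + 3 = 2 * v + 2 * r + 1" "r + v - 1 + 1 = v + r"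
    using v r by simp_all
  note mixed = infsum_mixed_term_odd[OF M, unfolded this]
  have sigma_sum: "(\<Sum>i=1..2 * v - 1. (2::real) ^ (i - 1) * real ((2 * r + i - 1) choose i)
      * sigmaOdd (2 * v + 1 - i) (2 * r + i))
    = 2 ^ (2 * v) * (\<Sum>i=1..2 * v - 1. real ((2 * r + i - 1) choose i)
      * (sigmaOdd (2 * v + 1 - i) (2 * r + i) / 2 ^ (2 * v + 1 - i)))"
    unfolding sum_distrib_left times_divide_eq_right mult.assoc
    by (rule sum.cong[OF refl], rule power_pred_mult_eq) auto
  have "{0..2 * r - 2} = {..<2 * r - 1}" and "2 * v + 2 * r - 1 = 2 * r + 2 * v - 1"
    using r by auto
  note identity = sigma_lambda_mixed_identity[OF v r, unfolded mixed]
  show ?thesis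
    unfolding lambdaDir_eq_lambda_odd sigma_sum \<open>{0..2 * r - 2} = {..<2 * r - 1}\<close>
      \<open>2 * v + 2 * r - 1 = 2 * r + 2 * v - 1\<close>
    using identity
    by (simp only: mult.assoc flip: distrib_left right_diff_distrib) (simp add: right_diff_distrib)
qed

end
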